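(* Let $R$ be a commutative Bezout domain. The ring $M_2(R)$ of $2\times 2$ matrices over $R$ has stable range 1.5 if and only if $R$ has stable range 1.5.
   Context: A commutative Bezout domain is a commutative integral domain with $1\ne0$ in which every finitely generated ideal is principal. $R$ has stable range 1.5 if for all $a,b\in R$ and $c\in R\setminus\{0\}$ with $(a,b,c)=1$ there is $r\in R$ with $(a+br,c)=1$. $M_2(R)$ has stable range 1.5 if for all $A,B,C\in M_2(R)$ with $C\neq 0$ which are left relatively prime, i.e. $AM_2(R)+BM_2(R)+CM_2(R)=M_2(R)$ (equivalently their left greatest common divisor is invertible), there exists $T\in M_2(R)$ such that $A+BT$ and $C$ are left relatively prime, i.e. $(A+BT)M_2(R)+CM_2(R)=M_2(R)$. *)

theory Defs
  imports "HOL-Analysis.Analysis"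
begin

definition gen_ideal :: "'a::comm_ring_1 set \<Rightarrow> 'a set" where
  "gen_ideal S = {\<Sum>s\<in>S. f s * s | f. True}"

definition bezout_domain :: "'a::idom itself \<Rightarrow> bool" where
  "bezout_domain _ \<longleftrightarrow>
     (\<forall>S::'a set. finite S \<longrightarrow> (\<exists>d. gen_ideal S = {d * r | r. True}))"

definition stable_range_1_5 :: "'a::comm_ring_1 itself \<Rightarrow> bool" where
  "stable_range_1_5 _ \<longleftrightarrow>
     (\<forall>a b c :: 'a. c \<noteq> 0 \<longrightarrow> gen_ideal {a, b, c} = UNIV \<longrightarrow>
        (\<exists>r. gen_ideal {a + b * r, c} = UNIV))"

type_synonym 'a mat2 = "'a^2^2"

definition left_rel_prime3 :: "'a::comm_ring_1 mat2 \<Rightarrow> 'a mat2 \<Rightarrow> 'a mat2 \<Rightarrow> bool" where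
  "left_rel_prime3 A B C \<longleftrightarrow> {A ** X + B ** Y + C ** Z | X Y Z. True} = (UNIV :: 'a mat2 set)"

definition left_rel_prime2 :: "'a::comm_ring_1 mat2 \<Rightarrow> 'a mat2 \<Rightarrow> bool" where
  "left_rel_prime2 A C \<longleftrightarrow> {A ** X + C ** Z | X Z. True} = (UNIV :: 'a mat2 set)"

definition mat2_stable_range_1_5 :: "'a::comm_ring_1 itself \<Rightarrow> bool" where
  "mat2_stable_range_1_5 _ \<longleftrightarrow>
     (\<forall>(A::'a mat2) (B::'a mat2) (C::'a mat2). C \<noteq> 0 \<longrightarrow> left_rel_prime3 A B C \<longrightarrow>
        (\<exists>T::'a mat2. left_rel_prime2 (A + B ** T) C))"

end

theory Submission
  imports Defs
begin

(* If ax + by + cz = 1 in R, then diag(a,1), diag(b,0), diag(c,c) are left relatively prime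
   in M_2(R), and the (1,1) and (2,1) entries of a witness for stable range 1.5 of M_2(R)
   give a witness for R.

   Conversely, the property "A + BT and C are left relatively prime for some T" is invariant
   under A |-> A + BT + CW, A |-> AV and (A,B,C) |-> (PA,PB,PC) for invertible P and V.
   By a Bezout row operation C gets a column with a nonzero entry above a zero.  One use of
   stable range makes the second row of A unimodular; a column operation turns it into (0,1)
   and a row operation then gives A = diag(m,1) without destroying the nonzero entry in the
   first row of C.  Now the (1,1) entry of AX + BY + CZ = 1 reads m X11 + beta + d s = 1 with
   d a gcd of the first row of C, and a second use of stable range gives (m + beta r) u + d w = 1,
   from which the required T, X, Z are written down explicitly. *)

section \<open>Finitely generated ideals\<close>

lemma gen_ideal_add:
  assumes "x \<in> gen_ideal S" "y \<in> gen_ideal S"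
  shows "x + y \<in> gen_ideal S"
proof -
  obtain f g where "x = (\<Sum>s\<in>S. f s * s)" "y = (\<Sum>s\<in>S. g s * s)"
    using assms by (auto simp: gen_ideal_def)
  then have "x + y = (\<Sum>s\<in>S. (f s + g s) * s)"
    by (simp add: sum.distrib distrib_right)
  then show ?thesis by (auto simp: gen_ideal_def)
qed

lemma gen_ideal_mult:
  assumes "y \<in> gen_ideal S"
  shows "x * y \<in> gen_ideal S"
proof -
  obtain f where "y = (\<Sum>s\<in>S. f s * s)" using assms by (auto simp: gen_ideal_def)
  then have "x * y = (\<Sum>s\<in>S. (x * f s) * s)"
    by (simp add: sum_distrib_left mult.assoc)
  then show ?thesis by (auto simp: gen_ideal_def)
qed

lemma gen_ideal_generator:
  assumes "finite S" "a \<in> S"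
  shows "a \<in> gen_ideal S"
proof -
  have "(\<Sum>s\<in>S. (if s = a then 1 else 0) * s) = (\<Sum>s\<in>S. if s = a then a else 0)"
    by (rule sum.cong) auto
  also have "\<dots> = a" using assms by simp
  finally have "a = (\<Sum>s\<in>S. (if s = a then 1 else 0) * s)" by simp
  then show ?thesis unfolding gen_ideal_def by (intro CollectI exI conjI TrueI)
qed

lemma gen_ideal_generator_mult:
  "finite S \<Longrightarrow> a \<in> S \<Longrightarrow> a * r \<in> gen_ideal S"
  using gen_ideal_mult[OF gen_ideal_generator, of S a r] by (simp add: mult.commute)

lemma gen_ideal_empty: "gen_ideal {} = {0}"
  by (auto simp: gen_ideal_def)

lemma gen_ideal_insertE:
  assumes "s \<in> gen_ideal (insert a S)" "finite S"
  obtains r t where "s = a * r + t" "t \<in> gen_ideal S"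
proof -
  obtain f where f: "s = (\<Sum>x\<in>insert a S. f x * x)" using assms(1) by (auto simp: gen_ideal_def)
  have sum_in: "(\<Sum>x\<in>S. f x * x) \<in> gen_ideal S" by (auto simp: gen_ideal_def)
  show ?thesis
  proof (cases "a \<in> S")
    case True
    then have "s = a * 0 + (\<Sum>x\<in>S. f x * x)" using f by (simp add: insert_absorb)
    then show ?thesis using sum_in by (rule that)
  next
    case False
    then have "s = a * f a + (\<Sum>x\<in>S. f x * x)" using f assms(2) by (simp add: mult.commute)
    then show ?thesis using sum_in by (rule that)
  qed
qed

lemma gen_ideal_eq_UNIV_iff: "gen_ideal S = UNIV \<longleftrightarrow> 1 \<in> gen_ideal S"
proof
  assume "1 \<in> gen_ideal S"
  then have "x \<in> gen_ideal S" for x using gen_ideal_mult[of 1 S x] by simp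
  then show "gen_ideal S = UNIV" by blast
qed simp

lemma gen_ideal_pair: "gen_ideal {a, b} = {a * x + b * y | x y. True}"
proof (intro equalityI subsetI)
  fix s assume "s \<in> gen_ideal {a, b}"
  then obtain x t where "s = a * x + t" "t \<in> gen_ideal {b}"
    by (rule gen_ideal_insertE) simp
  moreover from this(2) obtain y where "t = b * y"
    by (rule gen_ideal_insertE) (auto simp: gen_ideal_empty)
  ultimately show "s \<in> {a * x + b * y | x y. True}" by blast
next
  fix s assume "s \<in> {a * x + b * y | x y. True}"
  then obtain x y where "s = a * x + b * y" by blast
  moreover have "a * x + b * y \<in> gen_ideal {a, b}"
    by (intro gen_ideal_add gen_ideal_generator_mult) simp_all
  ultimately show "s \<in> gen_ideal {a, b}" by simp
qed

lemma gen_ideal_triple: "gen_ideal {a, b, c} = {a * x + b * y + c * z | x y z. True}"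
proof (intro equalityI subsetI)
  fix s assume "s \<in> gen_ideal {a, b, c}"
  then obtain x t where "s = a * x + t" "t \<in> gen_ideal {b, c}"
    by (rule gen_ideal_insertE) simp
  moreover from this(2) obtain y z where "t = b * y + c * z"
    unfolding gen_ideal_pair by blast
  ultimately have "s = a * x + b * y + c * z" by (simp add: add.assoc)
  then show "s \<in> {a * x + b * y + c * z | x y z. True}" by blast
next
  fix s assume "s \<in> {a * x + b * y + c * z | x y z. True}"
  then obtain x y z where "s = a * x + b * y + c * z" by blast
  moreover have "a * x + b * y + c * z \<in> gen_ideal {a, b, c}"
    by (intro gen_ideal_add gen_ideal_generator_mult) simp_all
  ultimately show "s \<in> gen_ideal {a, b, c}" by simp
qed

lemma gen_ideal_pair_eq_UNIV_iff:
  "gen_ideal {a, b} = UNIV \<longleftrightarrow> (\<exists>x y. a * x + b * y = (1::'a::comm_ring_1))"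
proof -
  have "1 \<in> gen_ideal {a, b} \<longleftrightarrow> (\<exists>x y. 1 = a * x + b * y)"
    unfolding gen_ideal_pair by blast
  then show ?thesis unfolding gen_ideal_eq_UNIV_iff by (simp add: eq_commute[of 1])
qed

lemma gen_ideal_triple_eq_UNIV_iff:
  "gen_ideal {a, b, c} = UNIV \<longleftrightarrow> (\<exists>x y z. a * x + b * y + c * z = (1::'a::comm_ring_1))"
proof -
  have "1 \<in> gen_ideal {a, b, c} \<longleftrightarrow> (\<exists>x y z. 1 = a * x + b * y + c * z)"
    unfolding gen_ideal_triple by blast
  then show ?thesis unfolding gen_ideal_eq_UNIV_iff by (simp add: eq_commute[of 1])
qed

lemma stable_range_1_5_iff:
  "stable_range_1_5 TYPE('a::comm_ring_1) \<longleftrightarrow>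
     (\<forall>a b c :: 'a. c \<noteq> 0 \<longrightarrow> (\<exists>x y z. a * x + b * y + c * z = 1) \<longrightarrow>
        (\<exists>r u v. (a + b * r) * u + c * v = 1))"
  unfolding stable_range_1_5_def gen_ideal_pair_eq_UNIV_iff gen_ideal_triple_eq_UNIV_iff ..

lemma stable_range_1_5D:
  assumes "stable_range_1_5 TYPE('a::comm_ring_1)" "c \<noteq> 0" "a * x + b * y + c * z = (1::'a)"
  shows "\<exists>r u v. (a + b * r) * u + c * v = 1"
  using assms unfolding stable_range_1_5_iff by blast

lemma bezout_domain_coprime_cofactors:
  fixes a b :: "'a::idom"
  assumes "bezout_domain TYPE('a)" "a \<noteq> 0 \<or> b \<noteq> 0"
  shows "\<exists>d p q e f. d \<noteq> 0 \<and> a = d * p \<and> b = d * q \<and> p * e + q * f = 1"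
proof -
  obtain d where d: "gen_ideal {a, b} = {d * r | r. True}"
    using assms(1) unfolding bezout_domain_def by (meson finite.emptyI finite.insertI)
  have "d * 1 \<in> gen_ideal {a, b}" unfolding d by blast
  then obtain e f where def: "d = a * e + b * f"
    unfolding gen_ideal_pair by auto
  have "a \<in> gen_ideal {a, b}" "b \<in> gen_ideal {a, b}" by (simp_all add: gen_ideal_generator)
  then obtain p q where pq: "a = d * p" "b = d * q" unfolding d by blast
  then have "d \<noteq> 0" using assms(2) by auto
  moreover have "d * (p * e + q * f) = d * 1" using def pq by (simp add: algebra_simps)
  ultimately have "p * e + q * f = 1" by simp
  with pq \<open>d \<noteq> 0\<close> show ?thesis by blast
qed

section \<open>Two-by-two matrices\<close>

definition mk2 :: "'a \<Rightarrow> 'a \<Rightarrow> 'a \<Rightarrow> 'a \<Rightarrow> 'a mat2" where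
  "mk2 a b c d = (\<chi> i j. if i = 1 then (if j = 1 then a else b) else (if j = 1 then c else d))"

lemma mk2_nth [simp]:
  "mk2 a b c d $ 1 $ 1 = a" "mk2 a b c d $ 1 $ 2 = b" "mk2 a b c d $ 2 $ 1 = c" "mk2 a b c d $ 2 $ 2 = d"
  by (simp_all add: mk2_def)

lemma mat_nth [simp]: "mat k $ i $ j = (if i = j then k else 0)"
  by (simp add: mat_def)

lemma mat2_eq_iff:
  "(M :: 'a mat2) = N \<longleftrightarrow>
     M $ 1 $ 1 = N $ 1 $ 1 \<and> M $ 1 $ 2 = N $ 1 $ 2 \<and> M $ 2 $ 1 = N $ 2 $ 1 \<and> M $ 2 $ 2 = N $ 2 $ 2"
  unfolding vec_eq_iff forall_2 by auto

lemma mat2_mult_nth: "((A :: 'a::semiring_1 mat2) ** B) $ i $ j = A $ i $ 1 * B $ 1 $ j + A $ i $ 2 * B $ 2 $ j"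
  by (simp add: matrix_matrix_mult_def sum_2)

lemma matrix_add_rdistrib: "((A :: 'a::semiring_1^'n^'m) + B) ** C = A ** C + B ** C"
  by (simp add: matrix_matrix_mult_def vec_eq_iff sum.distrib distrib_right)

lemma mk2_mult_adjugate:
  fixes a b c d :: "'a::comm_ring_1"
  shows "mk2 a b c d ** mk2 d (- b) (- c) a = mat (a * d - b * c)"
  by (simp add: mat2_eq_iff mat2_mult_nth algebra_simps)

lemma adjugate_mult_mk2:
  fixes a b c d :: "'a::comm_ring_1"
  shows "mk2 d (- b) (- c) a ** mk2 a b c d = mat (a * d - b * c)"
  by (simp add: mat2_eq_iff mat2_mult_nth algebra_simps)

lemma invertible_mk2: "a * d - b * c = (1 :: 'a::comm_ring_1) \<Longrightarrow> invertible (mk2 a b c d)"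
  unfolding invertible_def using mk2_mult_adjugate adjugate_mult_mk2 by metis

lemma left_rel_prime3_iff:
  "left_rel_prime3 A B C \<longleftrightarrow> (\<exists>X Y Z. A ** X + B ** Y + C ** Z = (mat 1 :: 'a::comm_ring_1 mat2))"
proof
  assume "left_rel_prime3 A B C"
  then have "mat 1 \<in> {A ** X + B ** Y + C ** Z | X Y Z. True}"
    unfolding left_rel_prime3_def by simp
  then show "\<exists>X Y Z. A ** X + B ** Y + C ** Z = mat 1" by fastforce
next
  assume "\<exists>X Y Z. A ** X + B ** Y + C ** Z = (mat 1 :: 'a mat2)"
  then obtain X Y Z where XYZ: "A ** X + B ** Y + C ** Z = mat 1" by blast
  have "M = A ** (X ** M) + B ** (Y ** M) + C ** (Z ** M)" for M :: "'a mat2"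
    using arg_cong[OF XYZ, of "\<lambda>N. N ** M"] by (simp add: matrix_add_rdistrib matrix_mul_assoc)
  then show "left_rel_prime3 A B C" unfolding left_rel_prime3_def by blast
qed

lemma left_rel_prime2_iff:
  "left_rel_prime2 A C \<longleftrightarrow> (\<exists>X Z. A ** X + C ** Z = (mat 1 :: 'a::comm_ring_1 mat2))"
proof
  assume "left_rel_prime2 A C"
  then have "mat 1 \<in> {A ** X + C ** Z | X Z. True}"
    unfolding left_rel_prime2_def by simp
  then show "\<exists>X Z. A ** X + C ** Z = mat 1" by fastforce
next
  assume "\<exists>X Z. A ** X + C ** Z = (mat 1 :: 'a mat2)"
  then obtain X Z where XZ: "A ** X + C ** Z = mat 1" by blast
  have "M = A ** (X ** M) + C ** (Z ** M)" for M :: "'a mat2"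
    using arg_cong[OF XZ, of "\<lambda>N. N ** M"] by (simp add: matrix_add_rdistrib matrix_mul_assoc)
  then show "left_rel_prime2 A C" unfolding left_rel_prime2_def by blast
qed

section \<open>Moves preserving left relative primality\<close>

lemma matrix_diff_ldistrib: "(A :: 'a::ring_1^'n^'m) ** (B - C) = A ** B - A ** C"
  by (simp add: matrix_matrix_mult_def vec_eq_iff sum_subtractf right_diff_distrib)

lemma matrix_mul_cancel_inner:
  fixes A Q Qv B :: "'a::semiring_1^'n^'n"
  assumes "Q ** Qv = mat 1"
  shows "(A ** Q) ** (Qv ** B) = A ** B"
proof -
  have "(A ** Q) ** (Qv ** B) = A ** (Q ** Qv) ** B" by (simp only: matrix_mul_assoc)
  then show ?thesis using assms by simp
qed

lemma invertibleE:
  assumes "invertible (P :: 'a::semiring_1^'n^'n)"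
  obtains Pv where "P ** Pv = mat 1" "Pv ** P = mat 1"
  using assms unfolding invertible_def by blast

lemma left_rel_prime3_mult_left:
  fixes A B C P :: "'a::comm_ring_1 mat2"
  assumes "invertible P" "left_rel_prime3 A B C"
  shows "left_rel_prime3 (P ** A) (P ** B) (P ** C)"
proof -
  obtain Pv where Pv: "P ** Pv = mat 1" using assms(1) by (rule invertibleE)
  obtain X Y Z where XYZ: "A ** X + B ** Y + C ** Z = mat 1"
    using assms(2) unfolding left_rel_prime3_iff by blast
  have "(P ** A) ** (X ** Pv) + (P ** B) ** (Y ** Pv) + (P ** C) ** (Z ** Pv)
      = P ** (A ** X + B ** Y + C ** Z) ** Pv"
    by (simp add: matrix_add_ldistrib matrix_add_rdistrib matrix_mul_assoc)
  also have "\<dots> = mat 1" using XYZ Pv by simp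
  finally show ?thesis unfolding left_rel_prime3_iff by blast
qed

lemma left_rel_prime3_mult_right:
  fixes A B C V :: "'a::comm_ring_1 mat2"
  assumes "invertible V" "left_rel_prime3 A B C"
  shows "left_rel_prime3 (A ** V) B C"
proof -
  obtain Vv where Vv: "V ** Vv = mat 1" using assms(1) by (rule invertibleE)
  obtain X Y Z where "A ** X + B ** Y + C ** Z = mat 1"
    using assms(2) unfolding left_rel_prime3_iff by blast
  then have "(A ** V) ** (Vv ** X) + B ** Y + C ** Z = mat 1"
    by (simp add: matrix_mul_cancel_inner[OF Vv])
  then show ?thesis unfolding left_rel_prime3_iff by blast
qed

lemma left_rel_prime3_add_mult:
  fixes A B C T W :: "'a::comm_ring_1 mat2"
  assumes "left_rel_prime3 A B C"
  shows "left_rel_prime3 (A + B ** T + C ** W) B C"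
proof -
  obtain X Y Z where XYZ: "A ** X + B ** Y + C ** Z = mat 1"
    using assms unfolding left_rel_prime3_iff by blast
  have "(A + B ** T + C ** W) ** X + B ** (Y - T ** X) + C ** (Z - W ** X)
      = A ** X + B ** Y + C ** Z"
    by (simp add: matrix_add_rdistrib matrix_diff_ldistrib matrix_mul_assoc)
  then have "(A + B ** T + C ** W) ** X + B ** (Y - T ** X) + C ** (Z - W ** X) = mat 1"
    using XYZ by simp
  then show ?thesis unfolding left_rel_prime3_iff by blast
qed

definition stable_reducible :: "'a::comm_ring_1 mat2 \<Rightarrow> 'a mat2 \<Rightarrow> 'a mat2 \<Rightarrow> bool" where
  "stable_reducible A B C \<longleftrightarrow> (\<exists>T. left_rel_prime2 (A + B ** T) C)"

lemma stable_reducible_iff: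
  "stable_reducible A B C \<longleftrightarrow> (\<exists>T X Z. (A + B ** T) ** X + C ** Z = mat 1)"
  unfolding stable_reducible_def left_rel_prime2_iff ..

lemma stable_reducible_mult_left:
  fixes A B C P :: "'a::comm_ring_1 mat2"
  assumes "invertible P" "stable_reducible (P ** A) (P ** B) (P ** C)"
  shows "stable_reducible A B C"
proof -
  obtain Pv where Pv: "Pv ** P = mat 1" using assms(1) by (rule invertibleE)
  obtain T X Z where "(P ** A + P ** B ** T) ** X + P ** C ** Z = mat 1"
    using assms(2) unfolding stable_reducible_iff by blast
  then have PM: "P ** ((A + B ** T) ** X + C ** Z) = mat 1"
    by (simp add: matrix_add_ldistrib matrix_add_rdistrib matrix_mul_assoc)
  have "(A + B ** T) ** X + C ** Z = (Pv ** P) ** ((A + B ** T) ** X + C ** Z)"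
    using Pv by simp
  also have "\<dots> = Pv ** (P ** ((A + B ** T) ** X + C ** Z))" by (simp only: matrix_mul_assoc)
  finally have "(A + B ** T) ** X + C ** Z = Pv" using PM by simp
  then have "((A + B ** T) ** X + C ** Z) ** P = mat 1" using Pv by simp
  then have "(A + B ** T) ** (X ** P) + C ** (Z ** P) = mat 1"
    by (simp add: matrix_add_rdistrib matrix_mul_assoc)
  then show ?thesis unfolding stable_reducible_iff by blast
qed

lemma stable_reducible_mult_right:
  fixes A B C V :: "'a::comm_ring_1 mat2"
  assumes "invertible V" "stable_reducible (A ** V) B C"
  shows "stable_reducible A B C"
proof -
  obtain Vv where Vv: "Vv ** V = mat 1" using assms(1) by (rule invertibleE)
  obtain T X Z where TXZ: "(A ** V + B ** T) ** X + C ** Z = mat 1"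
    using assms(2) unfolding stable_reducible_iff by blast
  have "(B ** T ** Vv) ** (V ** X) = B ** T ** X" by (rule matrix_mul_cancel_inner[OF Vv])
  then have "(A + B ** (T ** Vv)) ** (V ** X) + C ** Z = (A ** V + B ** T) ** X + C ** Z"
    by (simp add: matrix_add_rdistrib matrix_mul_assoc)
  with TXZ have "(A + B ** (T ** Vv)) ** (V ** X) + C ** Z = mat 1" by simp
  then show ?thesis unfolding stable_reducible_iff by blast
qed

lemma stable_reducible_add_mult:
  fixes A B C T W :: "'a::comm_ring_1 mat2"
  assumes "stable_reducible (A + B ** T + C ** W) B C"
  shows "stable_reducible A B C"
proof -
  obtain T' X Z where TXZ: "(A + B ** T + C ** W + B ** T') ** X + C ** Z = mat 1"
    using assms unfolding stable_reducible_iff by blast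
  have "(A + B ** (T + T')) ** X + C ** (W ** X + Z)
      = (A + B ** T + C ** W + B ** T') ** X + C ** Z"
    by (simp add: matrix_add_ldistrib matrix_add_rdistrib matrix_mul_assoc algebra_simps)
  with TXZ have "(A + B ** (T + T')) ** X + C ** (W ** X + Z) = mat 1" by simp
  then show ?thesis unfolding stable_reducible_iff by blast
qed

section \<open>Reduction to a scalar relation\<close>

lemma left_rel_prime2_mk2_lower:
  fixes C :: "'a::comm_ring_1 mat2"
  assumes "a * u + (C $ 1 $ 1 * e + C $ 1 $ 2 * f) * w = 1"
  shows "left_rel_prime2 (mk2 a 0 \<rho> 1) C"
proof -
  define s where "s = (C $ 2 $ 1 * e + C $ 2 $ 2 * f) * w"
  have "mk2 a 0 \<rho> 1 ** mk2 u 0 (- (\<rho> * u) - s) 1 + C ** mk2 (e * w) 0 (f * w) 0 = mat 1"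
    using assms by (simp add: mat2_eq_iff mat2_mult_nth s_def algebra_simps)
  then show ?thesis unfolding left_rel_prime2_iff by blast
qed

lemma stable_reducible_mk2_diag:
  fixes B C :: "'a::idom mat2"
  assumes bez: "bezout_domain TYPE('a)" and sr: "stable_range_1_5 TYPE('a)"
    and C1: "C $ 1 $ j \<noteq> 0" and lrp: "left_rel_prime3 (mk2 m 0 0 1) B C"
  shows "stable_reducible (mk2 m 0 0 1) B C"
proof -
  obtain X Y Z where XYZ: "mk2 m 0 0 1 ** X + B ** Y + C ** Z = mat 1"
    using lrp unfolding left_rel_prime3_iff by blast
  define \<beta> where "\<beta> = B $ 1 $ 1 * Y $ 1 $ 1 + B $ 1 $ 2 * Y $ 2 $ 1"
  have E11: "m * X $ 1 $ 1 + \<beta> + C $ 1 $ 1 * Z $ 1 $ 1 + C $ 1 $ 2 * Z $ 2 $ 1 = 1"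
    using arg_cong[OF XYZ, of "\<lambda>M. M $ 1 $ 1"] by (simp add: mat2_mult_nth \<beta>_def add.assoc)
  have "C $ 1 $ 1 \<noteq> 0 \<or> C $ 1 $ 2 \<noteq> 0" using C1 exhaust_2[of j] by auto
  then obtain d p q e f where d: "d \<noteq> 0" "C $ 1 $ 1 = d * p" "C $ 1 $ 2 = d * q"
    and pq: "p * e + q * f = 1"
    using bezout_domain_coprime_cofactors[OF bez] by blast
  have "m * X $ 1 $ 1 + \<beta> * 1 + d * (p * Z $ 1 $ 1 + q * Z $ 2 $ 1) = 1"
    using E11 d by (simp add: algebra_simps)
  then obtain r u w where ruw: "(m + \<beta> * r) * u + d * w = 1"
    using stable_range_1_5D[OF sr \<open>d \<noteq> 0\<close>] by blast
  define T where "T = mk2 (Y $ 1 $ 1 * r) 0 (Y $ 2 $ 1 * r) 0"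
  have "mk2 m 0 0 1 + B ** T = mk2 (m + \<beta> * r) 0 ((B ** T) $ 2 $ 1) 1"
    by (simp add: mat2_eq_iff mat2_mult_nth T_def \<beta>_def algebra_simps)
  moreover have "C $ 1 $ 1 * e + C $ 1 $ 2 * f = d"
    using d pq by (metis distrib_left mult.assoc mult.right_neutral)
  ultimately have "left_rel_prime2 (mk2 m 0 0 1 + B ** T) C"
    using left_rel_prime2_mk2_lower ruw by metis
  then show ?thesis unfolding stable_reducible_def by blast
qed

lemma left_rel_prime3_second_row_unimodular:
  fixes A B C :: "'a::comm_ring_1 mat2"
  assumes sr: "stable_range_1_5 TYPE('a)" and lrp: "left_rel_prime3 A B C"
  shows "\<exists>T W p q. (A + B ** T + C ** W) $ 2 $ 1 * p + (A + B ** T + C ** W) $ 2 $ 2 * q = 1"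
proof -
  obtain X Y Z where XYZ: "A ** X + B ** Y + C ** Z = mat 1"
    using lrp unfolding left_rel_prime3_iff by blast
  define D where "D = (B ** Y + C ** Z) $ 2 $ 2"
  have E22: "A $ 2 $ 1 * X $ 1 $ 2 + A $ 2 $ 2 * X $ 2 $ 2 + D = 1"
    using arg_cong[OF XYZ, of "\<lambda>M. M $ 2 $ 2"] by (simp add: mat2_mult_nth D_def algebra_simps)
  \<comment> \<open>\<open>T\<close> and \<open>W\<close> are built from the second columns of \<open>Y\<close> and \<open>Z\<close>, so that \<open>D\<close> enters the second row\<close>
  show ?thesis
  proof (cases "A $ 2 $ 1 = 0")
    case True
    let ?T = "mk2 (Y $ 1 $ 2) 0 (Y $ 2 $ 2) 0" and ?W = "mk2 (Z $ 1 $ 2) 0 (Z $ 2 $ 2) 0"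
    have "(A + B ** ?T + C ** ?W) $ 2 $ 1 * 1 + (A + B ** ?T + C ** ?W) $ 2 $ 2 * X $ 2 $ 2 = 1"
      using E22 True by (simp add: mat2_mult_nth D_def algebra_simps)
    then show ?thesis by blast
  next
    case False
    have "A $ 2 $ 2 * X $ 2 $ 2 + D * 1 + A $ 2 $ 1 * X $ 1 $ 2 = 1"
      using E22 by (simp add: algebra_simps)
    then obtain r u v where ruv: "(A $ 2 $ 2 + D * r) * u + A $ 2 $ 1 * v = 1"
      using stable_range_1_5D[OF sr False] by blast
    let ?T = "mk2 0 (Y $ 1 $ 2 * r) 0 (Y $ 2 $ 2 * r)" and ?W = "mk2 0 (Z $ 1 $ 2 * r) 0 (Z $ 2 $ 2 * r)"
    have "(A + B ** ?T + C ** ?W) $ 2 $ 1 * v + (A + B ** ?T + C ** ?W) $ 2 $ 2 * u = 1"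
      using ruv by (simp add: mat2_mult_nth D_def algebra_simps)
    then show ?thesis by blast
  qed
qed

lemma second_row_unimodular_reduction:
  fixes A :: "'a::comm_ring_1 mat2"
  assumes "A $ 2 $ 1 * p + A $ 2 $ 2 * q = 1"
  shows "\<exists>V m n. invertible V \<and> A ** V = mk2 m n 0 1"
proof -
  let ?V = "mk2 (A $ 2 $ 2) p (- A $ 2 $ 1) q"
  have "invertible ?V" using assms by (intro invertible_mk2) (simp add: algebra_simps)
  moreover have "A ** ?V = mk2 ((A ** ?V) $ 1 $ 1) ((A ** ?V) $ 1 $ 2) 0 1"
    using assms by (simp add: mat2_eq_iff mat2_mult_nth algebra_simps)
  ultimately show ?thesis by blast
qed

lemma bezout_column_reduction:
  fixes C :: "'a::idom mat2"
  assumes bez: "bezout_domain TYPE('a)" and "C $ 1 $ j \<noteq> 0 \<or> C $ 2 $ j \<noteq> 0"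
  shows "\<exists>P :: 'a mat2. invertible P \<and> (P ** C) $ 1 $ j \<noteq> 0 \<and> (P ** C) $ 2 $ j = 0"
proof -
  obtain d p q e f where d: "d \<noteq> 0" "C $ 1 $ j = d * p" "C $ 2 $ j = d * q"
    and pq: "p * e + q * f = 1"
    using bezout_domain_coprime_cofactors[OF bez assms(2)] by blast
  let ?P = "mk2 e f (- q) p"
  have "invertible ?P" using pq by (intro invertible_mk2) (simp add: algebra_simps)
  moreover have "(?P ** C) $ 1 $ j = d" "(?P ** C) $ 2 $ j = 0"
    using d(2,3) pq by (simp_all add: mat2_mult_nth algebra_simps flip: distrib_left)
  ultimately show ?thesis using d(1) by auto
qed

lemma stable_reducible_if_second_row_unimodular:
  fixes A B C :: "'a::idom mat2"
  assumes bez: "bezout_domain TYPE('a)" and sr: "stable_range_1_5 TYPE('a)"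
    and lrp: "left_rel_prime3 A B C" and row: "A $ 2 $ 1 * p + A $ 2 $ 2 * q = 1"
    and C: "C $ 1 $ j \<noteq> 0" "C $ 2 $ j = 0"
  shows "stable_reducible A B C"
proof -
  obtain V m n where V: "invertible V" "A ** V = mk2 m n 0 1"
    using second_row_unimodular_reduction[OF row] by blast
  define E :: "'a mat2" where "E = mk2 1 (- n) 0 1"
  have E: "invertible E" unfolding E_def by (rule invertible_mk2) simp
  have EAV: "E ** (A ** V) = mk2 m 0 0 1"
    using V(2) by (simp add: E_def mat2_eq_iff mat2_mult_nth)
  \<comment> \<open>the row operation \<open>E\<close> cannot destroy \<open>C $ 1 $ j\<close>, as \<open>C $ 2 $ j = 0\<close>\<close>
  have "(E ** C) $ 1 $ j \<noteq> 0" using C by (simp add: E_def mat2_mult_nth)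
  moreover have "left_rel_prime3 (mk2 m 0 0 1) (E ** B) (E ** C)"
    using left_rel_prime3_mult_left[OF E left_rel_prime3_mult_right[OF V(1) lrp]]
    unfolding EAV .
  ultimately have "stable_reducible (E ** (A ** V)) (E ** B) (E ** C)"
    unfolding EAV by (rule stable_reducible_mk2_diag[OF bez sr])
  then have "stable_reducible (A ** V) B C" by (rule stable_reducible_mult_left[OF E])
  then show ?thesis by (rule stable_reducible_mult_right[OF V(1)])
qed

lemma stable_reducible_if_column_reduced:
  fixes A B C :: "'a::idom mat2"
  assumes bez: "bezout_domain TYPE('a)" and sr: "stable_range_1_5 TYPE('a)"
    and lrp: "left_rel_prime3 A B C" and C: "C $ 1 $ j \<noteq> 0" "C $ 2 $ j = 0"
  shows "stable_reducible A B C"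
proof -
  obtain T W p q where "(A + B ** T + C ** W) $ 2 $ 1 * p + (A + B ** T + C ** W) $ 2 $ 2 * q = 1"
    using left_rel_prime3_second_row_unimodular[OF sr lrp] by blast
  moreover have "left_rel_prime3 (A + B ** T + C ** W) B C"
    by (rule left_rel_prime3_add_mult[OF lrp])
  ultimately have "stable_reducible (A + B ** T + C ** W) B C"
    using stable_reducible_if_second_row_unimodular[OF bez sr _ _ C] by blast
  then show ?thesis by (rule stable_reducible_add_mult)
qed

lemma stable_reducible_if_left_rel_prime3:
  fixes A B C :: "'a::idom mat2"
  assumes bez: "bezout_domain TYPE('a)" and sr: "stable_range_1_5 TYPE('a)"
    and "C \<noteq> 0" and lrp: "left_rel_prime3 A B C"
  shows "stable_reducible A B C"
proof -
  obtain j where "C $ 1 $ j \<noteq> 0 \<or> C $ 2 $ j \<noteq> 0"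
    using \<open>C \<noteq> 0\<close> by (auto simp: vec_eq_iff forall_2)
  then obtain P :: "'a mat2" where P: "invertible P" "(P ** C) $ 1 $ j \<noteq> 0" "(P ** C) $ 2 $ j = 0"
    using bezout_column_reduction[OF bez] by blast
  have "stable_reducible (P ** A) (P ** B) (P ** C)"
    using stable_reducible_if_column_reduced[OF bez sr left_rel_prime3_mult_left[OF P(1) lrp] P(2,3)] .
  then show ?thesis by (rule stable_reducible_mult_left[OF P(1)])
qed

lemma mat2_stable_range_1_5_iff:
  "mat2_stable_range_1_5 TYPE('a::comm_ring_1) \<longleftrightarrow>
     (\<forall>A B C :: 'a mat2. C \<noteq> 0 \<longrightarrow> left_rel_prime3 A B C \<longrightarrow> stable_reducible A B C)"
  unfolding mat2_stable_range_1_5_def stable_reducible_def ..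

lemma stable_range_1_5_if_mat2_stable_range_1_5:
  assumes "mat2_stable_range_1_5 TYPE('a::comm_ring_1)"
  shows "stable_range_1_5 TYPE('a)"
  unfolding stable_range_1_5_iff
proof (intro allI impI)
  fix a b c :: 'a
  assume "c \<noteq> 0" and "\<exists>x y z. a * x + b * y + c * z = 1"
  then obtain x y z where xyz: "a * x + b * y + c * z = 1" by blast
  define A :: "'a mat2" where "A = mk2 a 0 0 1"
  define B :: "'a mat2" where "B = mk2 b 0 0 0"
  define C :: "'a mat2" where "C = mk2 c 0 0 c"
  have "C \<noteq> 0" using \<open>c \<noteq> 0\<close> by (auto simp: C_def mat2_eq_iff)
  moreover have "A ** mk2 x 0 0 1 + B ** mk2 y 0 0 0 + C ** mk2 z 0 0 0 = mat 1"
    using xyz by (simp add: A_def B_def C_def mat2_eq_iff mat2_mult_nth)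
  then have "left_rel_prime3 A B C" unfolding left_rel_prime3_iff by blast
  ultimately have "stable_reducible A B C" using assms unfolding mat2_stable_range_1_5_iff by blast
  then obtain T X Z where TXZ: "(A + B ** T) ** X + C ** Z = mat 1"
    unfolding stable_reducible_iff by blast
  have E21: "X $ 2 $ 1 + c * Z $ 2 $ 1 = 0"
    using arg_cong[OF TXZ, of "\<lambda>M. M $ 2 $ 1"] by (simp add: A_def B_def C_def mat2_mult_nth)
  have "(a + b * T $ 1 $ 1) * X $ 1 $ 1 + b * T $ 1 $ 2 * X $ 2 $ 1 + c * Z $ 1 $ 1 = 1"
    using arg_cong[OF TXZ, of "\<lambda>M. M $ 1 $ 1"]
    by (simp add: A_def B_def C_def mat2_mult_nth algebra_simps)
  moreover have "X $ 2 $ 1 = - (c * Z $ 2 $ 1)" using E21 by (simp add: eq_neg_iff_add_eq_0)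
  ultimately have "(a + b * T $ 1 $ 1) * X $ 1 $ 1 + c * (Z $ 1 $ 1 - b * T $ 1 $ 2 * Z $ 2 $ 1) = 1"
    by (simp add: algebra_simps)
  then show "\<exists>r u v. (a + b * r) * u + c * v = 1" by blast
qed

theorem theorem2p20:
  assumes "bezout_domain TYPE('a::idom)"
  shows "mat2_stable_range_1_5 TYPE('a) \<longleftrightarrow> stable_range_1_5 TYPE('a)"
proof
  show "mat2_stable_range_1_5 TYPE('a) \<Longrightarrow> stable_range_1_5 TYPE('a)"
    by (rule stable_range_1_5_if_mat2_stable_range_1_5)
next
  assume "stable_range_1_5 TYPE('a)"
  then show "mat2_stable_range_1_5 TYPE('a)"
    unfolding mat2_stable_range_1_5_iff
    using stable_reducible_if_left_rel_prime3[OF assms] by blast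
qed

end
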